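(* A ring $R$ is strongly nil-clean if and only if $R$ is a GSWNC ring and $R$ is a UU ring.
   Context: All rings are associative with identity. An element $a$ of a ring is strongly nil-clean if $a = e + q$ with $e$ idempotent, $q$ nilpotent and $eq = qe$; it is strongly weakly nil-clean if there exist an idempotent $e$ and a nilpotent $q$ with $eq = qe$ such that $a = q + e$ or $a = q - e$. A ring is strongly nil-clean if all its elements are strongly nil-clean; it is GSWNC if every non-invertible element is strongly weakly nil-clean. A ring $R$ is UU if every unit is unipotent, i.e., $U(R) \subseteq 1 + {\rm Nil}(R)$. *)

theory Defs
  imports Main
begin

definition idempotent :: "'a::ring_1 \<Rightarrow> bool" where
  "idempotent e \<longleftrightarrow> e * e = e"

definition nilpotent :: "'a::ring_1 \<Rightarrow> bool" where
  "nilpotent q \<longleftrightarrow> (\<exists>n::nat. q ^ n = 0)"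

definition is_unit :: "'a::ring_1 \<Rightarrow> bool" where
  "is_unit u \<longleftrightarrow> (\<exists>v. u * v = 1 \<and> v * u = 1)"

definition strongly_nil_clean_elem :: "'a::ring_1 \<Rightarrow> bool" where
  "strongly_nil_clean_elem a \<longleftrightarrow>
     (\<exists>e q. idempotent e \<and> nilpotent q \<and> e * q = q * e \<and> a = e + q)"

definition strongly_weakly_nil_clean_elem :: "'a::ring_1 \<Rightarrow> bool" where
  "strongly_weakly_nil_clean_elem a \<longleftrightarrow>
     (\<exists>e q. idempotent e \<and> nilpotent q \<and> e * q = q * e \<and> (a = q + e \<or> a = q - e))"

definition strongly_nil_clean_ring :: "'a::ring_1 itself \<Rightarrow> bool" where
  "strongly_nil_clean_ring _ \<longleftrightarrow> (\<forall>a::'a. strongly_nil_clean_elem a)"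

definition GSWNC_ring :: "'a::ring_1 itself \<Rightarrow> bool" where
  "GSWNC_ring _ \<longleftrightarrow> (\<forall>a::'a. \<not> is_unit a \<longrightarrow> strongly_weakly_nil_clean_elem a)"

definition UU_ring :: "'a::ring_1 itself \<Rightarrow> bool" where
  "UU_ring _ \<longleftrightarrow> (\<forall>u::'a. is_unit u \<longrightarrow> nilpotent (u - 1))"

end

theory Submission
  imports Defs
begin

text \<open>A strongly nil-clean unit \<open>u = e + q\<close> has \<open>e = u - q\<close> a unit, since a unit minus a
  commuting nilpotent is a unit; an idempotent unit is \<open>1\<close>, so \<open>u - 1 = q\<close> is nilpotent.
  Conversely, in a UU ring \<open>-2 = -1 - 1\<close> is nilpotent, so \<open>q - e = e + (q - 2 e)\<close> is
  strongly nil-clean whenever \<open>q + e\<close> is; units are \<open>1 + (u - 1)\<close>.\<close>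

lemma power_mult_distrib_commuting:
  fixes x y :: "'a::monoid_mult"
  assumes "x * y = y * x"
  shows "(x * y) ^ n = x ^ n * y ^ n"
proof (induction n)
  case (Suc n)
  have "(x * y) ^ Suc n = x * (y * x ^ n) * y ^ n"
    using Suc by (simp add: mult.assoc)
  also have "\<dots> = x * (x ^ n * y) * y ^ n"
    using power_commuting_commutes[OF assms] by simp
  also have "\<dots> = x ^ Suc n * y ^ Suc n"
    by (simp add: mult.assoc)
  finally show ?case .
qed simp

lemma power_eq_0_mono:
  fixes x :: "'a::ring_1"
  assumes "x ^ m = 0" and "m \<le> i"
  shows "x ^ i = 0"
  using assms by (metis le_add_diff_inverse mult_zero_left power_add)

lemma commuting_nilpotent_monomial_mult_power_add:
  fixes x y :: "'a::ring_1"
  assumes xy: "x * y = y * x" and x: "x ^ m = 0" and y: "y ^ n = 0"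
    and "m + n \<le> i + j + k"
  shows "x ^ i * y ^ j * (x + y) ^ k = 0"
  using assms(4)
proof (induction k arbitrary: i j)
  case 0
  then have "m \<le> i \<or> n \<le> j" by linarith
  then show ?case using power_eq_0_mono[OF x] power_eq_0_mono[OF y] by auto
next
  case (Suc k)
  have "x ^ i * y ^ j * x = x ^ Suc i * y ^ j"
    using power_commuting_commutes[OF xy[symmetric]] by (metis mult.assoc power_Suc2)
  moreover have "x ^ i * y ^ j * y = x ^ i * y ^ Suc j"
    by (simp add: mult.assoc power_commutes)
  moreover have "x ^ i * y ^ j * (x + y) ^ Suc k
      = (x ^ i * y ^ j * x + x ^ i * y ^ j * y) * (x + y) ^ k"
    by (simp only: power_Suc distrib_left distrib_right mult.assoc)
  ultimately have "x ^ i * y ^ j * (x + y) ^ Suc k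
      = x ^ Suc i * y ^ j * (x + y) ^ k + x ^ i * y ^ Suc j * (x + y) ^ k"
    by (simp add: distrib_right)
  also have "\<dots> = 0"
  proof -
    have "x ^ Suc i * y ^ j * (x + y) ^ k = 0" "x ^ i * y ^ Suc j * (x + y) ^ k = 0"
      by (rule Suc.IH, use Suc.prems in simp)+
    then show ?thesis by simp
  qed
  finally show ?case .
qed

lemma nilpotent_add_commuting:
  fixes x y :: "'a::ring_1"
  assumes "x * y = y * x" and "nilpotent x" and "nilpotent y"
  shows "nilpotent (x + y)"
proof -
  obtain m n where "x ^ m = 0" "y ^ n = 0"
    using assms(2,3) unfolding nilpotent_def by auto
  from commuting_nilpotent_monomial_mult_power_add[OF assms(1) this, of 0 0 "m + n"]
  show ?thesis unfolding nilpotent_def by auto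
qed

lemma nilpotent_uminus:
  fixes x :: "'a::ring_1"
  assumes "nilpotent x"
  shows "nilpotent (- x)"
  using assms unfolding nilpotent_def by (metis mult_zero_right power_minus)

lemma nilpotent_mult_commuting:
  fixes x y :: "'a::ring_1"
  assumes "x * y = y * x" and "nilpotent y"
  shows "nilpotent (x * y)"
  using assms power_mult_distrib_commuting[OF assms(1)] unfolding nilpotent_def
  by (metis mult_zero_right)

lemma is_unit_mult:
  fixes a b :: "'a::ring_1"
  assumes "is_unit a" and "is_unit b"
  shows "is_unit (a * b)"
proof -
  obtain a' b' where "a * a' = 1" "a' * a = 1" "b * b' = 1" "b' * b = 1"
    using assms unfolding is_unit_def by auto
  then have "a * b * (b' * a') = 1" "b' * a' * (a * b) = 1"
    by (metis mult.assoc mult_1_left)+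
  then show ?thesis unfolding is_unit_def by blast
qed

lemma is_unit_one_minus_nilpotent:
  fixes x :: "'a::ring_1"
  assumes "nilpotent x"
  shows "is_unit (1 - x)"
proof -
  obtain n where n: "x ^ n = 0"
    using assms unfolding nilpotent_def by auto
  have "(1 - x) * (\<Sum>i<n. x ^ i) = (\<Sum>i<n. x ^ i - x ^ Suc i)"
    by (simp add: sum_distrib_left left_diff_distrib sum_subtractf)
  moreover have "(\<Sum>i<n. x ^ i) * (1 - x) = (\<Sum>i<n. x ^ i - x ^ Suc i)"
    by (simp add: sum_distrib_right right_diff_distrib sum_subtractf power_commutes)
  moreover have "(\<Sum>i<n. x ^ i - x ^ Suc i) = 1 - x ^ n"
    by (simp only: sum_lessThan_telescope') simp
  ultimately show ?thesis
    unfolding is_unit_def using n by auto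
qed

lemma is_unit_diff_nilpotent_commuting:
  fixes u q :: "'a::ring_1"
  assumes "is_unit u" and "u * q = q * u" and "nilpotent q"
  shows "is_unit (u - q)"
proof -
  obtain v where v: "u * v = 1" "v * u = 1"
    using assms(1) unfolding is_unit_def by auto
  have "v * q = v * (q * u) * v"
    using v by (simp add: mult.assoc)
  also have "\<dots> = (v * u) * q * v"
    using assms(2) by (simp add: mult.assoc)
  also have "\<dots> = q * v"
    using v by simp
  finally have "is_unit (1 - v * q)"
    using is_unit_one_minus_nilpotent nilpotent_mult_commuting assms(3) by blast
  then have "is_unit (u * (1 - v * q))"
    using is_unit_mult assms(1) by blast
  also have "u * (1 - v * q) = u - q"
    using v by (simp add: algebra_simps mult.assoc[symmetric])
  finally show ?thesis .
qed

lemma idempotent_unit_eq_1: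
  fixes e :: "'a::ring_1"
  assumes "idempotent e" and "is_unit e"
  shows "e = 1"
proof -
  obtain w where w: "w * e = 1"
    using assms(2) unfolding is_unit_def by auto
  have "e = w * (e * e)"
    using w by (simp add: mult.assoc[symmetric])
  also have "\<dots> = 1"
    using assms(1) w unfolding idempotent_def by simp
  finally show ?thesis .
qed

lemma strongly_nil_clean_unit_unipotent:
  fixes u :: "'a::ring_1"
  assumes "strongly_nil_clean_elem u" and "is_unit u"
  shows "nilpotent (u - 1)"
proof -
  obtain e q where e: "idempotent e" and q: "nilpotent q" and eq: "e * q = q * e"
    and u: "u = e + q"
    using assms(1) unfolding strongly_nil_clean_elem_def by auto
  have "u * q = q * u"
    using eq u by (simp add: algebra_simps)
  then have "is_unit e"
    using is_unit_diff_nilpotent_commuting[OF assms(2) _ q] u by simp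
  then show ?thesis
    using idempotent_unit_eq_1[OF e] u q by simp
qed

lemma strongly_nil_clean_imp_strongly_weakly_nil_clean:
  fixes a :: "'a::ring_1"
  assumes "strongly_nil_clean_elem a"
  shows "strongly_weakly_nil_clean_elem a"
  using assms unfolding strongly_nil_clean_elem_def strongly_weakly_nil_clean_elem_def
  by (metis add.commute)

lemma UU_ring_nilpotent_two:
  assumes "UU_ring TYPE('a::ring_1)"
  shows "nilpotent (2 :: 'a)"
proof -
  have "is_unit (- 1 :: 'a)"
    unfolding is_unit_def by (rule exI[of _ "- 1"]) simp
  then have "nilpotent (- 1 - 1 :: 'a)"
    using assms unfolding UU_ring_def by blast
  then show ?thesis
    using nilpotent_uminus by fastforce
qed

lemma strongly_nil_clean_nilpotent_minus_idempotent:
  fixes e q :: "'a::ring_1"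
  assumes "nilpotent (2 :: 'a)" and "idempotent e" and "nilpotent q" and eq: "e * q = q * e"
  shows "strongly_nil_clean_elem (q - e)"
proof -
  have "e * 2 = 2 * e"
    using mult_of_nat_commute[of 2 e] by simp
  then have "nilpotent (e + e)"
    using nilpotent_mult_commuting[OF _ assms(1)] by (simp add: mult_2_right)
  moreover have "q * - (e + e) = - (e + e) * q"
    using eq by (simp add: ring_distribs)
  ultimately have "nilpotent (q + - (e + e))"
    using nilpotent_add_commuting assms(3) nilpotent_uminus by blast
  moreover have "e * (q + - (e + e)) = (q + - (e + e)) * e"
    using eq by (simp add: ring_distribs)
  moreover have "q - e = e + (q + - (e + e))"
    by (simp add: algebra_simps)
  ultimately show ?thesis
    using assms(2) unfolding strongly_nil_clean_elem_def by blast
qed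

lemma unipotent_strongly_nil_clean:
  fixes a :: "'a::ring_1"
  assumes "nilpotent (a - 1)"
  shows "strongly_nil_clean_elem a"
  using assms unfolding strongly_nil_clean_elem_def idempotent_def
  by (intro exI[of _ 1] exI[of _ "a - 1"]) simp

theorem lemma2p31:
  "strongly_nil_clean_ring TYPE('a::ring_1) \<longleftrightarrow>
     GSWNC_ring TYPE('a) \<and> UU_ring TYPE('a)"
proof
  assume "strongly_nil_clean_ring TYPE('a::ring_1)"
  then show "GSWNC_ring TYPE('a) \<and> UU_ring TYPE('a)"
    unfolding strongly_nil_clean_ring_def GSWNC_ring_def UU_ring_def
    using strongly_nil_clean_imp_strongly_weakly_nil_clean strongly_nil_clean_unit_unipotent
    by blast
next
  assume GSWNC_UU: "GSWNC_ring TYPE('a) \<and> UU_ring TYPE('a)"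
  have "strongly_nil_clean_elem a" for a :: 'a
  proof (cases "is_unit a")
    case True
    then show ?thesis
      using GSWNC_UU unipotent_strongly_nil_clean unfolding UU_ring_def by blast
  next
    case False
    then obtain e q where "idempotent e" "nilpotent q" "e * q = q * e" "a = q + e \<or> a = q - e"
      using GSWNC_UU unfolding GSWNC_ring_def strongly_weakly_nil_clean_elem_def by blast
    then show ?thesis
      using strongly_nil_clean_nilpotent_minus_idempotent UU_ring_nilpotent_two GSWNC_UU
      unfolding strongly_nil_clean_elem_def by (metis add.commute)
  qed
  then show "strongly_nil_clean_ring TYPE('a)"
    unfolding strongly_nil_clean_ring_def by blast
qed

end
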